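(* For every integer $m \geq 3$, $\gamma_{b,2}(P_m \square C_6) = m + c$, where $c \in \{0,1\}$ if $m \equiv 0 \pmod 4$ and $c = 1$ if $m \equiv 1, 2,$ or $3 \pmod 4$.
   Context: For a graph $G$, a $2$-limited broadcast is a function $f: V(G) \to \{0,1,2\}$. A vertex $u$ hears the broadcast from $v$ if $f(v) > 0$ and $d(u,v) \leq f(v)$, where $d$ is the distance in $G$. The broadcast $f$ is dominating if every vertex of $G$ hears the broadcast from some vertex. The cost of $f$ is $\sum_{v \in V(G)} f(v)$. The $2$-limited broadcast domination number $\gamma_{b,2}(G)$ is the minimum cost of a $2$-limited dominating broadcast on $G$. $C_6$ denotes the cycle on $6$ vertices, $P_m$ the path on $m$ vertices, and $\square$ the Cartesian product of graphs. *)

theory Defs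
  imports Main
begin

definition gdist :: "('a \<Rightarrow> 'a \<Rightarrow> bool) \<Rightarrow> 'a \<Rightarrow> 'a \<Rightarrow> nat" where
  "gdist E u v = (LEAST k. (E ^^ k) u v)"

definition path_adj :: "nat \<Rightarrow> nat \<Rightarrow> nat \<Rightarrow> bool" where
  "path_adj m i j \<longleftrightarrow> i < m \<and> j < m \<and> (i + 1 = j \<or> j + 1 = i)"

definition cycle_adj :: "nat \<Rightarrow> nat \<Rightarrow> nat \<Rightarrow> bool" where
  "cycle_adj n i j \<longleftrightarrow> i < n \<and> j < n \<and> i \<noteq> j \<and> (j = (i + 1) mod n \<or> i = (j + 1) mod n)"

definition cart_adj :: "('a \<Rightarrow> 'a \<Rightarrow> bool) \<Rightarrow> ('b \<Rightarrow> 'b \<Rightarrow> bool) \<Rightarrow> 'a \<times> 'b \<Rightarrow> 'a \<times> 'b \<Rightarrow> bool" where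
  "cart_adj A B x y \<longleftrightarrow> (A (fst x) (fst y) \<and> snd x = snd y) \<or> (fst x = fst y \<and> B (snd x) (snd y))"

definition limited_broadcast :: "nat \<Rightarrow> 'a set \<Rightarrow> ('a \<Rightarrow> nat) \<Rightarrow> bool" where
  "limited_broadcast k V f \<longleftrightarrow> (\<forall>v\<in>V. f v \<le> k) \<and> (\<forall>v. v \<notin> V \<longrightarrow> f v = 0)"

definition hears :: "('a \<Rightarrow> 'a \<Rightarrow> bool) \<Rightarrow> ('a \<Rightarrow> nat) \<Rightarrow> 'a \<Rightarrow> 'a \<Rightarrow> bool" where
  "hears E f u v \<longleftrightarrow> f v > 0 \<and> gdist E u v \<le> f v"

definition dominating_broadcast :: "'a set \<Rightarrow> ('a \<Rightarrow> 'a \<Rightarrow> bool) \<Rightarrow> ('a \<Rightarrow> nat) \<Rightarrow> bool" where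
  "dominating_broadcast V E f \<longleftrightarrow> (\<forall>u\<in>V. \<exists>v\<in>V. hears E f u v)"

definition broadcast_cost :: "'a set \<Rightarrow> ('a \<Rightarrow> nat) \<Rightarrow> nat" where
  "broadcast_cost V f = (\<Sum>v\<in>V. f v)"

definition gamma_b :: "nat \<Rightarrow> 'a set \<Rightarrow> ('a \<Rightarrow> 'a \<Rightarrow> bool) \<Rightarrow> nat" where
  "gamma_b k V E = Inf {broadcast_cost V f | f. limited_broadcast k V f \<and> dominating_broadcast V E f}"

definition grid_V :: "nat \<Rightarrow> (nat \<times> nat) set" where
  "grid_V m = {..<m} \<times> {..<6}"

definition grid_E :: "nat \<Rightarrow> nat \<times> nat \<Rightarrow> nat \<times> nat \<Rightarrow> bool" where
  "grid_E m = cart_adj (path_adj m) (cycle_adj 6)"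

end

theory Submission
  imports Defs
begin

(* In P_m \<box> C_n the distance is the path distance plus the cyclic distance, so a broadcast
   of strength r reaches at most 2 (r - t) + 1 vertices of a column at column distance t.
   With a_c and b_c the numbers of strength-2 and strength-1 broadcasts in column c, covering
   the six vertices of column i of P_m \<box> C_6 needs
     a_(i-2) + 3 a_(i-1) + b_(i-1) + 5 a_i + 3 b_i + 3 a_(i+1) + b_(i+1) + a_(i+2) \<ge> 6,
   and the cost is the sum of 2 a_c + b_c.  Scanning the columns from left to right, a finite
   state (the deficits of the two previous columns, the capped supply already sent to the
   next two) and a potential on the reachable states show that each column adds at least
   1 + (old potential) - (new potential) to the cost, which forces cost \<ge> m + 1.
   Strength-2 broadcasts in the even columns, alternating between rows 0 and 3, plus one
   strength-1 broadcast in the last column when m is even, attain m + 1.  So the value is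
   m + 1 for every m \<ge> 2, including m = 0 mod 4. *)

section \<open>Distances in the product of a path and a cycle\<close>

lemma relpowp_sym:
  assumes "symp E" "(E ^^ k) x y"
  shows "(E ^^ k) y x"
  using assms(2)
proof (induction k arbitrary: y)
  case (Suc k)
  from Suc.prems obtain z where "(E ^^ k) x z" "E z y" by (rule relpowp_Suc_E)
  then show ?case by (metis Suc.IH assms(1) relpowp_Suc_I2 sympD)
qed simp

lemma relpowp_lower_bound:
  assumes "D u = 0" "\<And>y z. E y z \<Longrightarrow> D z \<le> D y + 1" "(E ^^ k) u v"
  shows "D v \<le> k"
  using assms(3)
proof (induction k arbitrary: v)
  case (Suc k)
  from Suc.prems obtain y where "(E ^^ k) u y" "E y v" by (rule relpowp_Suc_E)
  then show ?case using Suc.IH assms(2) by fastforce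
qed (use assms(1) in simp)

lemma gdist_eqI:
  assumes "(E ^^ d) u v" "\<And>k. (E ^^ k) u v \<Longrightarrow> d \<le> k"
  shows "gdist E u v = d"
  unfolding gdist_def using assms by (rule Least_equality)

lemma relpowp_cart_adj_fst:
  "(A ^^ k) a a' \<Longrightarrow> (cart_adj A B ^^ k) (a, b) (a', b)"
proof (induction k arbitrary: a')
  case (Suc k)
  from Suc.prems obtain a'' where "(A ^^ k) a a''" "A a'' a'" by (rule relpowp_Suc_E)
  moreover from \<open>A a'' a'\<close> have "cart_adj A B (a'', b) (a', b)" by (simp add: cart_adj_def)
  ultimately show ?case using Suc.IH by (blast intro: relpowp_Suc_I)
qed simp

lemma relpowp_cart_adj_snd:
  "(B ^^ k) b b' \<Longrightarrow> (cart_adj A B ^^ k) (a, b) (a, b')"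
proof (induction k arbitrary: b')
  case (Suc k)
  from Suc.prems obtain b'' where "(B ^^ k) b b''" "B b'' b'" by (rule relpowp_Suc_E)
  moreover from \<open>B b'' b'\<close> have "cart_adj A B (a, b'') (a, b')" by (simp add: cart_adj_def)
  ultimately show ?case using Suc.IH by (blast intro: relpowp_Suc_I)
qed simp

lemma relpowp_cart_adjD:
  assumes "(cart_adj A B ^^ k) x y"
  obtains k1 k2 where "k = k1 + k2" "(A ^^ k1) (fst x) (fst y)" "(B ^^ k2) (snd x) (snd y)"
  using assms
proof (induction k arbitrary: y thesis)
  case (Suc k)
  from Suc.prems(2) obtain z where "(cart_adj A B ^^ k) x z" "cart_adj A B z y"
    by (rule relpowp_Suc_E)
  with Suc.IH obtain k1 k2 where k: "k = k1 + k2"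
    and walks: "(A ^^ k1) (fst x) (fst z)" "(B ^^ k2) (snd x) (snd z)"
    by blast
  from \<open>cart_adj A B z y\<close> consider "A (fst z) (fst y)" "snd z = snd y"
    | "fst z = fst y" "B (snd z) (snd y)"
    unfolding cart_adj_def by blast
  then show ?case
  proof cases
    case 1
    then show ?thesis using Suc.prems(1)[of "Suc k1" k2] k walks by auto
  next
    case 2
    then show ?thesis using Suc.prems(1)[of k1 "Suc k2"] k walks by auto
  qed
qed simp

lemma relpowp_cart_adjI:
  assumes "(A ^^ k1) (fst x) (fst y)" "(B ^^ k2) (snd x) (snd y)"
  shows "(cart_adj A B ^^ (k1 + k2)) x y"
proof -
  have "(cart_adj A B ^^ k1) (fst x, snd x) (fst y, snd x)"
    and "(cart_adj A B ^^ k2) (fst y, snd x) (fst y, snd y)"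
    using assms by (simp_all only: relpowp_cart_adj_fst relpowp_cart_adj_snd)
  then show ?thesis by (metis prod.collapse relpowp_trans)
qed

lemma gdist_cart_adj:
  assumes "(A ^^ k1) (fst x) (fst y)" "(B ^^ k2) (snd x) (snd y)"
  shows "gdist (cart_adj A B) x y = gdist A (fst x) (fst y) + gdist B (snd x) (snd y)"
proof (rule gdist_eqI)
  have "(A ^^ gdist A (fst x) (fst y)) (fst x) (fst y)"
    "(B ^^ gdist B (snd x) (snd y)) (snd x) (snd y)"
    unfolding gdist_def using assms by (auto intro: LeastI)
  then show "(cart_adj A B ^^ (gdist A (fst x) (fst y) + gdist B (snd x) (snd y))) x y"
    by (rule relpowp_cart_adjI)
next
  fix k assume "(cart_adj A B ^^ k) x y"
  then obtain k1 k2 where "k = k1 + k2" "(A ^^ k1) (fst x) (fst y)" "(B ^^ k2) (snd x) (snd y)"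
    by (rule relpowp_cart_adjD)
  then show "gdist A (fst x) (fst y) + gdist B (snd x) (snd y) \<le> k"
    unfolding gdist_def by (metis Least_le add_mono)
qed

definition path_dist :: "nat \<Rightarrow> nat \<Rightarrow> nat" where
  "path_dist i j = (i - j) + (j - i)"

definition cycle_dist :: "nat \<Rightarrow> nat \<Rightarrow> nat \<Rightarrow> nat" where
  "cycle_dist n i j = min (path_dist i j) (n - path_dist i j)"

lemma symp_path_adj: "symp (path_adj m)"
  by (auto simp: symp_def path_adj_def)

lemma symp_cycle_adj: "symp (cycle_adj n)"
  by (auto simp: symp_def cycle_adj_def)

lemma relpowp_path_adj: "i + d < m \<Longrightarrow> (path_adj m ^^ d) i (i + d)"
proof (induction d)
  case (Suc d)
  then have "path_adj m (i + d) (i + Suc d)" by (simp add: path_adj_def)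
  with Suc show ?case using relpowp_Suc_I by fastforce
qed simp

lemma relpowp_path_dist:
  assumes "i < m" "j < m"
  shows "(path_adj m ^^ path_dist i j) i j"
proof (cases "i \<le> j")
  case True
  then show ?thesis using relpowp_path_adj[of i "j - i" m] assms by (simp add: path_dist_def)
next
  case False
  then have "(path_adj m ^^ path_dist i j) j i"
    using relpowp_path_adj[of j "i - j" m] assms by (simp add: path_dist_def)
  then show ?thesis by (rule relpowp_sym[OF symp_path_adj])
qed

lemma gdist_path_adj:
  assumes "i < m" "j < m"
  shows "gdist (path_adj m) i j = path_dist i j"
proof (rule gdist_eqI)
  show "(path_adj m ^^ path_dist i j) i j" using assms by (rule relpowp_path_dist)
  show "path_dist i j \<le> k" if "(path_adj m ^^ k) i j" for k
    by (rule relpowp_lower_bound[OF _ _ that]) (auto simp: path_dist_def path_adj_def)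
qed

lemma cycle_adj_Suc: "2 \<le> n \<Longrightarrow> j < n \<Longrightarrow> cycle_adj n j ((j + 1) mod n)"
  by (cases "j + 1 = n") (auto simp: cycle_adj_def)

lemma relpowp_cycle_adj:
  assumes "2 \<le> n" "j < n"
  shows "(cycle_adj n ^^ d) j ((j + d) mod n)"
proof (induction d)
  case (Suc d)
  have "(j + Suc d) mod n = ((j + d) mod n + 1) mod n" by (simp add: mod_Suc)
  moreover have "cycle_adj n ((j + d) mod n) (((j + d) mod n + 1) mod n)"
    using assms by (intro cycle_adj_Suc) simp_all
  ultimately show ?case using relpowp_Suc_I[OF Suc.IH] by simp
qed (use assms in simp)

lemma cycle_dist_cases_le:
  assumes "i \<le> j" "j < n"
  shows "j = (i + cycle_dist n i j) mod n \<or> i = (j + cycle_dist n i j) mod n"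
proof (cases "j - i \<le> n - (j - i)")
  case True
  then have "cycle_dist n i j = j - i" using assms by (simp add: cycle_dist_def path_dist_def)
  then show ?thesis using assms by simp
next
  case False
  then have "cycle_dist n i j = n - (j - i)" using assms by (simp add: cycle_dist_def path_dist_def)
  moreover have "j + (n - (j - i)) = i + n" using assms by simp
  ultimately show ?thesis using assms by simp
qed

lemma cycle_dist_commute: "cycle_dist n i j = cycle_dist n j i"
  by (simp add: cycle_dist_def path_dist_def add.commute)

lemma cycle_dist_cases:
  assumes "i < n" "j < n"
  shows "j = (i + cycle_dist n i j) mod n \<or> i = (j + cycle_dist n i j) mod n"
  using cycle_dist_cases_le[of i j n] cycle_dist_cases_le[of j i n] assms
  by (cases "i \<le> j") (auto simp: cycle_dist_commute)

lemma cycle_dist_adj: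
  assumes "u < n" "cycle_adj n y z"
  shows "cycle_dist n u z \<le> cycle_dist n u y + 1"
  using assms unfolding cycle_adj_def cycle_dist_def path_dist_def
  by (auto simp: mod_Suc split: if_splits) arith+

lemma relpowp_cycle_dist:
  assumes "2 \<le> n" "i < n" "j < n"
  shows "(cycle_adj n ^^ cycle_dist n i j) i j"
  using cycle_dist_cases[OF assms(2,3)]
proof
  assume "j = (i + cycle_dist n i j) mod n"
  then show ?thesis using relpowp_cycle_adj[OF assms(1,2)] by metis
next
  assume "i = (j + cycle_dist n i j) mod n"
  then have "(cycle_adj n ^^ cycle_dist n i j) j i" using relpowp_cycle_adj[OF assms(1,3)] by metis
  then show ?thesis by (rule relpowp_sym[OF symp_cycle_adj])
qed

lemma gdist_cycle_adj:
  assumes "2 \<le> n" "i < n" "j < n"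
  shows "gdist (cycle_adj n) i j = cycle_dist n i j"
proof (rule gdist_eqI)
  show "(cycle_adj n ^^ cycle_dist n i j) i j" using assms by (rule relpowp_cycle_dist)
  show "cycle_dist n i j \<le> k" if "(cycle_adj n ^^ k) i j" for k
    by (rule relpowp_lower_bound[OF _ cycle_dist_adj[OF assms(2)] that])
      (simp add: cycle_dist_def path_dist_def)
qed

lemma gdist_path_cycle:
  assumes "2 \<le> n" "u \<in> {..<m} \<times> {..<n}" "v \<in> {..<m} \<times> {..<n}"
  shows "gdist (cart_adj (path_adj m) (cycle_adj n)) u v
    = path_dist (fst u) (fst v) + cycle_dist n (snd u) (snd v)"
proof -
  have "(path_adj m ^^ path_dist (fst u) (fst v)) (fst u) (fst v)"
    "(cycle_adj n ^^ cycle_dist n (snd u) (snd v)) (snd u) (snd v)"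
    using assms by (auto intro: relpowp_path_dist relpowp_cycle_dist)
  then show ?thesis
    using assms by (simp add: gdist_cart_adj gdist_path_adj gdist_cycle_adj mem_Times_iff)
qed

lemma card_cycle_ball:
  assumes "j' < n"
  shows "card {j. j < n \<and> cycle_dist n j j' \<le> k} \<le> 2 * k + 1"
proof -
  let ?wrap = "\<lambda>t. nat ((int j' + t) mod int n)"
  have "{j. j < n \<and> cycle_dist n j j' \<le> k} \<subseteq> ?wrap ` {- int k..int k}"
  proof safe
    fix j assume j: "j < n" "cycle_dist n j j' \<le> k"
    have "\<exists>t\<in>{- int k..int k}. (int j' + t) mod int n = int j"
    proof (cases "path_dist j j' \<le> k")
      case True
      then show ?thesis using j by (intro bexI[of _ "int j - int j'"]) (auto simp: path_dist_def)
    next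
      case False
      then have far: "n - path_dist j j' \<le> k" using j by (simp add: cycle_dist_def)
      show ?thesis
      proof (cases "j' < j")
        case True
        then show ?thesis using j far
          by (intro bexI[of _ "int j - int j' - int n"]) (auto simp: path_dist_def)
      next
        case False
        then show ?thesis using j far assms
          by (intro bexI[of _ "int j - int j' + int n"]) (auto simp: path_dist_def)
      qed
    qed
    then show "j \<in> ?wrap ` {- int k..int k}" by force
  qed
  then have "card {j. j < n \<and> cycle_dist n j j' \<le> k} \<le> card (?wrap ` {- int k..int k})"
    by (rule card_mono[rotated]) simp
  also have "\<dots> \<le> 2 * k + 1"
    using card_image_le[of "{- int k..int k}" ?wrap] by simp
  finally show ?thesis .
qed

section \<open>Covering a column\<close>

definition broadcast_reach :: "nat \<Rightarrow> nat \<Rightarrow> nat" where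
  "broadcast_reach r t = (if 0 < r \<and> t \<le> r then 2 * (r - t) + 1 else 0)"

lemma card_hears_column:
  assumes "2 \<le> n" "i < m" "v \<in> {..<m} \<times> {..<n}"
  shows "card {j. j < n \<and> hears (cart_adj (path_adj m) (cycle_adj n)) f (i, j) v}
    \<le> broadcast_reach (f v) (path_dist i (fst v))"
proof -
  let ?t = "path_dist i (fst v)"
  have "{j. j < n \<and> hears (cart_adj (path_adj m) (cycle_adj n)) f (i, j) v}
      = {j. j < n \<and> 0 < f v \<and> ?t + cycle_dist n j (snd v) \<le> f v}"
    using assms by (auto simp: hears_def gdist_path_cycle mem_Times_iff)
  also have "\<dots> \<subseteq>
      (if 0 < f v \<and> ?t \<le> f v then {j. j < n \<and> cycle_dist n j (snd v) \<le> f v - ?t} else {})"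
    by auto
  finally have "card {j. j < n \<and> hears (cart_adj (path_adj m) (cycle_adj n)) f (i, j) v}
      \<le> card (if 0 < f v \<and> ?t \<le> f v then {j. j < n \<and> cycle_dist n j (snd v) \<le> f v - ?t} else {})"
    by (rule card_mono[rotated]) simp
  also have "\<dots> \<le> broadcast_reach (f v) ?t"
    using card_cycle_ball[of "snd v" n] assms(3) by (auto simp: broadcast_reach_def mem_Times_iff)
  finally show ?thesis .
qed

lemma column_domination:
  assumes "dominating_broadcast ({..<m} \<times> {..<n}) (cart_adj (path_adj m) (cycle_adj n)) f"
    and "2 \<le> n" "i < m"
  shows "n \<le> (\<Sum>v \<in> {..<m} \<times> {..<n}. broadcast_reach (f v) (path_dist i (fst v)))"
proof -
  let ?H = "\<lambda>v. {j. j < n \<and> hears (cart_adj (path_adj m) (cycle_adj n)) f (i, j) v}"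
  have "{..<n} \<subseteq> (\<Union>v \<in> {..<m} \<times> {..<n}. ?H v)"
    using assms(1,3) unfolding dominating_broadcast_def by fastforce
  then have "n \<le> card (\<Union>v \<in> {..<m} \<times> {..<n}. ?H v)"
    using card_mono[of "\<Union>v \<in> {..<m} \<times> {..<n}. ?H v" "{..<n}"] by auto
  also have "\<dots> \<le> (\<Sum>v \<in> {..<m} \<times> {..<n}. card (?H v))"
    by (rule card_UN_le) simp
  also have "\<dots> \<le> (\<Sum>v \<in> {..<m} \<times> {..<n}. broadcast_reach (f v) (path_dist i (fst v)))"
    by (rule sum_mono) (use assms(2,3) card_hears_column in blast)
  finally show ?thesis .
qed

section \<open>Scanning the columns\<close>

text \<open>\<open>a c\<close> and \<open>b c\<close> are the numbers of strength-2 and strength-1 broadcasts in column \<open>c\<close>;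
  \<open>column_supply a b k i\<close> bounds how many vertices of column \<open>i\<close> the columns below \<open>k\<close> cover.\<close>

definition column_supply :: "(nat \<Rightarrow> nat) \<Rightarrow> (nat \<Rightarrow> nat) \<Rightarrow> nat \<Rightarrow> nat \<Rightarrow> nat" where
  "column_supply a b k i =
     (\<Sum>c<k. a c * broadcast_reach 2 (path_dist i c) + b c * broadcast_reach 1 (path_dist i c))"

lemma column_supply_Suc:
  "column_supply a b (Suc k) i = column_supply a b k i
     + a k * broadcast_reach 2 (path_dist i k) + b k * broadcast_reach 1 (path_dist i k)"
  by (simp add: column_supply_def)

lemma column_supply_far: "k + 2 \<le> i \<Longrightarrow> column_supply a b k i = 0"
  by (auto simp: column_supply_def broadcast_reach_def path_dist_def)

lemma column_supply_saturated:
  assumes "i + 3 \<le> k" "k \<le> k'"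
  shows "column_supply a b k' i = column_supply a b k i"
  using assms(2)
proof (induction k' rule: dec_induct)
  case (step j)
  then have "3 \<le> path_dist i j" using assms(1) by (simp add: path_dist_def)
  then show ?case using step.IH by (simp add: column_supply_Suc broadcast_reach_def)
qed simp

type_synonym scan_state = "nat \<times> nat \<times> nat \<times> nat"

text \<open>After the first \<open>k\<close> columns: the deficits of columns \<open>k - 2\<close> and \<open>k - 1\<close> (zero for
  columns that do not exist) and the supply already received by columns \<open>k\<close> and \<open>k + 1\<close>, capped
  at 6.  Column \<open>k - 2\<close> can only be helped further by \<open>a k\<close>.\<close>

definition scan_state :: "(nat \<Rightarrow> nat) \<Rightarrow> (nat \<Rightarrow> nat) \<Rightarrow> nat \<Rightarrow> scan_state" where
  "scan_state a b k =
     (if k < 2 then 0 else 6 - column_supply a b k (k - 2),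
      if k < 1 then 0 else 6 - column_supply a b k (k - 1),
      min 6 (column_supply a b k k),
      min 6 (column_supply a b k (k + 1)))"

definition scan_step :: "scan_state \<Rightarrow> nat \<Rightarrow> nat \<Rightarrow> scan_state" where
  "scan_step s a b = (case s of (_, d1, s0, s1) \<Rightarrow>
     (d1 - (3 * a + b), 6 - s0 - (5 * a + 3 * b), min 6 (s1 + 3 * a + b), a))"

lemma scan_state_0: "scan_state a b 0 = (0, 0, 0, 0)"
  by (simp add: scan_state_def column_supply_def)

lemma scan_state_Suc:
  assumes "a k \<le> 6"
  shows "scan_state a b (Suc k) = scan_step (scan_state a b k) (a k) (b k)"
proof -
  have "column_supply a b k (k + 2) = 0" by (rule column_supply_far) simp
  then show ?thesis
    using assms
    by (cases k) (auto simp: scan_state_def scan_step_def column_supply_Suc broadcast_reach_def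
        path_dist_def min_def)
qed

lemma scan_state_fst_le:
  assumes "k < m" "\<And>i. i < m \<Longrightarrow> 6 \<le> column_supply a b m i"
  shows "fst (scan_state a b k) \<le> a k"
proof (cases "k < 2")
  case False
  have "column_supply a b m (k - 2) = column_supply a b (Suc k) (k - 2)"
    using False assms(1) by (intro column_supply_saturated) simp_all
  also have "\<dots> = column_supply a b k (k - 2) + a k"
    using False by (simp add: column_supply_Suc broadcast_reach_def path_dist_def)
  finally have "column_supply a b m (k - 2) = column_supply a b k (k - 2) + a k" .
  moreover have "6 \<le> column_supply a b m (k - 2)" using assms by simp
  ultimately show ?thesis using False by (simp add: scan_state_def)
qed (simp add: scan_state_def)

lemma scan_state_final:
  assumes "1 \<le> m" "\<And>i. i < m \<Longrightarrow> 6 \<le> column_supply a b m i"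
  shows "fst (scan_state a b m) = 0" "fst (snd (scan_state a b m)) = 0"
  using assms by (simp_all add: scan_state_def)

text \<open>The states reachable from \<open>(0, 0, 0, 0)\<close> with their potentials, obtained by a
  shortest-path computation over this finite state space.\<close>

definition potential_table :: "(scan_state \<times> int) list" where
  "potential_table = [((0,0,0,0),0), ((0,0,1,0),0), ((0,0,2,0),0), ((0,0,3,0),0), ((0,0,3,1),0), ((0,0,4,0),0), ((0,0,4,1),0), ((0,0,5,0),0), ((0,0,5,1),0), ((0,0,6,0),(-1)), ((0,0,6,1),(-1)), ((0,0,6,2),(-1)), ((0,0,6,3),(-1)), ((0,0,6,4),(-1)), ((0,0,6,5),(-1)), ((0,0,6,6),(-2)), ((0,1,0,0),1), ((0,1,1,0),1), ((0,1,3,1),0), ((0,2,0,0),1), ((0,2,1,0),1), ((0,3,0,0),1), ((0,3,1,0),1), ((0,4,0,0),2), ((0,5,0,0),2), ((0,6,0,0),2), ((1,0,2,0),1), ((1,0,3,0),1), ((1,0,4,0),1), ((1,0,4,1),1), ((1,0,5,0),1), ((1,0,5,1),1), ((1,1,3,1),1), ((1,2,1,0),1), ((1,3,1,0),1), ((1,5,0,0),2), ((1,6,0,0),2), ((2,0,2,0),2), ((2,0,3,0),2), ((2,0,4,0),2), ((2,0,4,1),2), ((2,1,3,1),2), ((2,2,1,0),2), ((2,3,1,0),2), ((2,5,0,0),2), ((2,6,0,0),2), ((3,0,2,0),4), ((3,0,3,0),4), ((3,1,3,1),4), ((3,3,1,0),4), ((3,5,0,0),4), ((3,6,0,0),4),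 ((4,0,2,0),6), ((4,3,1,0),6), ((4,6,0,0),6), ((5,3,1,0),8), ((5,6,0,0),8), ((6,6,0,0),9)]"

lemma potential_table_step_check:
  "list_all (\<lambda>(s, p). list_all (\<lambda>(a, b). fst s \<le> a \<longrightarrow>
       (case map_of potential_table (scan_step s a b) of
          None \<Rightarrow> False
        | Some q \<Rightarrow> p + 1 \<le> int (2 * a + b) + q))
     (List.product [0..<7] [0..<7])) potential_table"
  by code_simp

text \<open>The initial state also occurs later, with potential 0, so the invariant of the scan only
  holds from the first column on, and the first column gets a check that is stronger by one.\<close>

lemma potential_table_first_check:
  "list_all (\<lambda>(a, b).
       case map_of potential_table (scan_step (0, 0, 0, 0) a b) of
         None \<Rightarrow> False
       | Some q \<Rightarrow> 2 \<le> int (2 * a + b) + q)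
     (List.product [0..<7] [0..<7])"
  by code_simp

lemma potential_table_final_check:
  "list_all (\<lambda>(s, p). fst s = 0 \<and> fst (snd s) = 0 \<longrightarrow> p \<le> 0) potential_table"
  by code_simp

lemma potential_step:
  assumes "map_of potential_table s = Some p" "a \<le> 6" "b \<le> 6" "fst s \<le> a"
  shows "\<exists>q. map_of potential_table (scan_step s a b) = Some q
    \<and> p + 1 \<le> int (2 * a + b) + q"
proof -
  have "(s, p) \<in> set potential_table" "(a, b) \<in> set (List.product [0..<7] [0..<7])"
    using assms(1-3) by (auto dest: map_of_SomeD)
  then show ?thesis
    using potential_table_step_check assms(4) unfolding list_all_iff
    by (fastforce split: option.splits)
qed

lemma potential_first:
  assumes "a \<le> 6" "b \<le> 6"
  shows "\<exists>q. map_of potential_table (scan_step (0, 0, 0, 0) a b) = Some q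
    \<and> 2 \<le> int (2 * a + b) + q"
proof -
  have "(a, b) \<in> set (List.product [0..<7] [0..<7])" using assms by auto
  then show ?thesis
    using potential_table_first_check unfolding list_all_iff by (fastforce split: option.splits)
qed

lemma potential_final:
  assumes "map_of potential_table s = Some p" "fst s = 0" "fst (snd s) = 0"
  shows "p \<le> 0"
  using map_of_SomeD[OF assms(1)] assms(2,3) potential_table_final_check unfolding list_all_iff
  by fastforce

lemma column_cost_bound:
  fixes a b :: "nat \<Rightarrow> nat"
  assumes "1 \<le> m" "\<And>c. c < m \<Longrightarrow> a c + b c \<le> 6"
    and covered: "\<And>i. i < m \<Longrightarrow> 6 \<le> column_supply a b m i"
  shows "m + 1 \<le> (\<Sum>c<m. 2 * a c + b c)"
proof -
  have "\<exists>p. map_of potential_table (scan_state a b k) = Some p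
      \<and> int k + 1 \<le> int (\<Sum>c<k. 2 * a c + b c) + p" if "1 \<le> k" "k \<le> m" for k
    using that
  proof (induction k rule: dec_induct)
    case base
    then show ?case
      using potential_first[of "a 0" "b 0"] assms(2)[of 0]
      by (simp add: scan_state_Suc[of a 0] scan_state_0)
  next
    case (step j)
    then obtain p where p: "map_of potential_table (scan_state a b j) = Some p"
      "int j + 1 \<le> int (\<Sum>c<j. 2 * a c + b c) + p"
      by auto
    have "fst (scan_state a b j) \<le> a j"
      using step.prems covered by (intro scan_state_fst_le[of j m]) simp_all
    moreover have "a j \<le> 6" "b j \<le> 6" using assms(2)[of j] step.prems by simp_all
    ultimately obtain q
      where "map_of potential_table (scan_step (scan_state a b j) (a j) (b j)) = Some q"
        "p + 1 \<le> int (2 * a j + b j) + q"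
      using potential_step[OF p(1)] by blast
    then show ?case using p(2) \<open>a j \<le> 6\<close> by (auto simp: scan_state_Suc)
  qed
  then obtain p where "map_of potential_table (scan_state a b m) = Some p"
    "int m + 1 \<le> int (\<Sum>c<m. 2 * a c + b c) + p"
    using assms(1) by blast
  moreover have "p \<le> 0"
    using potential_final calculation(1) scan_state_final[OF assms(1) covered] by blast
  ultimately show ?thesis by linarith
qed

section \<open>The lower bound\<close>

lemma sum_values_le_2:
  fixes h :: "'a \<Rightarrow> nat" and g :: "nat \<Rightarrow> nat"
  assumes "finite J" "\<And>j. j \<in> J \<Longrightarrow> h j \<le> 2" "g 0 = 0"
  shows "(\<Sum>j\<in>J. g (h j)) = card {j \<in> J. h j = 2} * g 2 + card {j \<in> J. h j = 1} * g 1"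
proof -
  have "(\<Sum>j\<in>J. g (h j)) = (\<Sum>j\<in>J. (if h j = 2 then g 2 else 0) + (if h j = 1 then g 1 else 0))"
  proof (rule sum.cong)
    show "g (h j) = (if h j = 2 then g 2 else 0) + (if h j = 1 then g 1 else 0)" if "j \<in> J" for j
      using assms(2)[OF that] assms(3) by (cases "h j") (auto simp: numeral_2_eq_2 le_Suc_eq)
  qed simp
  also have "\<dots> = card {j \<in> J. h j = 2} * g 2 + card {j \<in> J. h j = 1} * g 1"
    using assms(1) by (simp add: sum.distrib sum.inter_filter[symmetric])
  finally show ?thesis .
qed

definition column_count :: "(nat \<times> nat \<Rightarrow> nat) \<Rightarrow> nat \<Rightarrow> nat \<Rightarrow> nat" where
  "column_count f r c = card {j. j < 6 \<and> f (c, j) = r}"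

lemma sum_grid_by_columns:
  assumes "limited_broadcast 2 (grid_V m) f" "\<And>c. g 0 c = 0"
  shows "(\<Sum>v\<in>grid_V m. g (f v) (fst v))
    = (\<Sum>c<m. column_count f 2 c * g 2 c + column_count f 1 c * g 1 c)"
proof -
  have "(\<Sum>v\<in>grid_V m. g (f v) (fst v)) = (\<Sum>c<m. \<Sum>j<6. g (f (c, j)) c)"
    by (simp add: grid_V_def sum.cartesian_product case_prod_beta')
  also have "\<dots> = (\<Sum>c<m. column_count f 2 c * g 2 c + column_count f 1 c * g 1 c)"
  proof (rule sum.cong)
    fix c assume "c \<in> {..<m}"
    then have "\<And>j. j \<in> {..<6} \<Longrightarrow> f (c, j) \<le> 2"
      using assms(1) by (auto simp: limited_broadcast_def grid_V_def)
    then show "(\<Sum>j<6. g (f (c, j)) c) = column_count f 2 c * g 2 c + column_count f 1 c * g 1 c"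
      using sum_values_le_2[of "{..<6}" "\<lambda>j. f (c, j)" "\<lambda>r. g r c"] assms(2)
      by (simp add: column_count_def lessThan_def)
  qed simp
  finally show ?thesis .
qed

lemma column_count_le: "column_count f 2 c + column_count f 1 c \<le> 6"
proof -
  have "column_count f 2 c + column_count f 1 c
      = card ({j. j < 6 \<and> f (c, j) = 2} \<union> {j. j < 6 \<and> f (c, j) = 1})"
    unfolding column_count_def by (subst card_Un_disjoint) auto
  also have "\<dots> \<le> card {..<6::nat}"
    by (rule card_mono) auto
  finally show ?thesis by simp
qed

lemma broadcast_cost_lower_bound:
  assumes "1 \<le> m" "limited_broadcast 2 (grid_V m) f"
    and "dominating_broadcast (grid_V m) (grid_E m) f"
  shows "m + 1 \<le> broadcast_cost (grid_V m) f"
proof -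
  let ?a = "column_count f 2" and ?b = "column_count f 1"
  have "6 \<le> column_supply ?a ?b m i" if "i < m" for i
  proof -
    have "6 \<le> (\<Sum>v\<in>grid_V m. broadcast_reach (f v) (path_dist i (fst v)))"
      using column_domination[of m 6 f i] assms(3) that by (simp add: grid_V_def grid_E_def)
    also have "\<dots> = column_supply ?a ?b m i"
      using sum_grid_by_columns[OF assms(2), of "\<lambda>r c. broadcast_reach r (path_dist i c)"]
      by (simp add: column_supply_def broadcast_reach_def)
    finally show ?thesis .
  qed
  then have "m + 1 \<le> (\<Sum>c<m. 2 * ?a c + ?b c)"
    using column_cost_bound[OF assms(1), of ?a ?b] column_count_le by blast
  also have "\<dots> = broadcast_cost (grid_V m) f"
    using sum_grid_by_columns[OF assms(2), of "\<lambda>r c. r"]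
    by (simp add: broadcast_cost_def mult.commute)
  finally show ?thesis .
qed

section \<open>A broadcast of cost m + 1\<close>

lemma gamma_b_eqI:
  assumes "limited_broadcast k V f" "dominating_broadcast V E f" "broadcast_cost V f = x"
    and "\<And>g. limited_broadcast k V g \<Longrightarrow> dominating_broadcast V E g \<Longrightarrow> x \<le> broadcast_cost V g"
  shows "gamma_b k V E = x"
  unfolding gamma_b_def by (rule cInf_eq_minimum) (use assms in auto)

definition broadcast_row :: "nat \<Rightarrow> nat" where
  "broadcast_row c = 3 * (c div 2 mod 2)"

definition staggered_broadcast :: "nat \<Rightarrow> nat \<times> nat \<Rightarrow> nat" where
  "staggered_broadcast m = (\<lambda>(c, j).
     if c < m \<and> even c \<and> j = broadcast_row c then 2
     else if c + 1 = m \<and> odd c \<and> j = 3 - broadcast_row c then 1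
     else 0)"

lemma broadcast_row_cases: "broadcast_row c = 0 \<or> broadcast_row c = 3"
  by (auto simp: broadcast_row_def)

lemma broadcast_row_add_2: "broadcast_row (c + 2) = 3 - broadcast_row c"
  by (auto simp: broadcast_row_def mod_Suc)

lemma broadcast_row_diff_2:
  assumes "2 \<le> c"
  shows "broadcast_row (c - 2) = 3 - broadcast_row c"
proof -
  have "broadcast_row c = 3 - broadcast_row (c - 2)"
    using assms broadcast_row_add_2[of "c - 2"] by (metis le_add_diff_inverse2)
  then show ?thesis using broadcast_row_cases[of "c - 2"] by auto
qed

lemma broadcast_row_odd:
  assumes "odd c"
  shows "broadcast_row (c - 1) = broadcast_row c" "broadcast_row (c + 1) = 3 - broadcast_row c"
  using assms by (auto simp: broadcast_row_def mod_Suc elim!: oddE)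

lemma cycle6_cover:
  assumes "j < 6" "r = 0 \<or> r = 3"
  shows "cycle_dist 6 j r \<le> 2 \<or> j = 3 - r" "cycle_dist 6 j r \<le> 1 \<or> cycle_dist 6 j (3 - r) \<le> 1"
proof -
  have "j \<in> {0, 1, 2, 3, 4, 5}" using assms(1) by auto
  then show "cycle_dist 6 j r \<le> 2 \<or> j = 3 - r" "cycle_dist 6 j r \<le> 1 \<or> cycle_dist 6 j (3 - r) \<le> 1"
    using assms(2) by (auto simp: cycle_dist_def path_dist_def)
qed

lemma hears_grid_witness:
  assumes "(i, j) \<in> grid_V m" "(c, j') \<in> grid_V m"
    and "0 < f (c, j')" "path_dist i c + cycle_dist 6 j j' \<le> f (c, j')"
  shows "\<exists>v\<in>grid_V m. hears (grid_E m) f (i, j) v"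
  using assms gdist_path_cycle[of 6 "(i, j)" m "(c, j')"]
  by (intro bexI[of _ "(c, j')"]) (auto simp: hears_def grid_V_def grid_E_def)

lemma staggered_broadcast_covers_even_column:
  assumes "(i, j) \<in> grid_V m" "even i" "2 \<le> m"
  shows "\<exists>v\<in>grid_V m. hears (grid_E m) (staggered_broadcast m) (i, j) v"
proof -
  let ?r = "broadcast_row i"
  have "i < m" "j < 6" using assms(1) by (auto simp: grid_V_def)
  have row: "?r = 0 \<or> ?r = 3" by (rule broadcast_row_cases)
  note witness = hears_grid_witness[OF assms(1)]
  have "i + 2 < m \<or> 2 \<le> i \<or> i = 0 \<and> m = 2" using assms(2,3) \<open>i < m\<close> by presburger
  then consider "cycle_dist 6 j ?r \<le> 2" | "j = 3 - ?r" "i + 2 < m" | "j = 3 - ?r" "2 \<le> i"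
    | "j = 3 - ?r" "i = 0" "m = 2"
    using cycle6_cover(1)[OF \<open>j < 6\<close> row] by blast
  then show ?thesis
  proof cases
    case 1
    then show ?thesis using \<open>i < m\<close> assms(2) row
      by (intro witness[of i ?r]) (auto simp: grid_V_def staggered_broadcast_def path_dist_def)
  next
    case 2
    then show ?thesis using assms(2) row broadcast_row_add_2[of i]
      by (intro witness[of "i + 2" "3 - ?r"])
        (auto simp: grid_V_def staggered_broadcast_def path_dist_def cycle_dist_def)
  next
    case 3
    then show ?thesis using \<open>i < m\<close> assms(2) row broadcast_row_diff_2[of i]
      by (intro witness[of "i - 2" "3 - ?r"])
        (auto simp: grid_V_def staggered_broadcast_def path_dist_def cycle_dist_def)
  next
    case 4
    then show ?thesis
      by (intro witness[of 1 3])
        (auto simp: grid_V_def staggered_broadcast_def broadcast_row_def path_dist_def cycle_dist_def)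
  qed
qed

lemma staggered_broadcast_covers_odd_column:
  assumes "(i, j) \<in> grid_V m" "odd i"
  shows "\<exists>v\<in>grid_V m. hears (grid_E m) (staggered_broadcast m) (i, j) v"
proof -
  let ?r = "broadcast_row i"
  have "i < m" "j < 6" using assms(1) by (auto simp: grid_V_def)
  have row: "?r = 0 \<or> ?r = 3" by (rule broadcast_row_cases)
  note witness = hears_grid_witness[OF assms(1)]
  consider "cycle_dist 6 j ?r \<le> 1" | "cycle_dist 6 j (3 - ?r) \<le> 1" "i + 1 < m"
    | "cycle_dist 6 j (3 - ?r) \<le> 1" "i + 1 = m"
    using cycle6_cover(2)[OF \<open>j < 6\<close> row] \<open>i < m\<close> by linarith
  then show ?thesis
  proof cases
    case 1
    then show ?thesis using \<open>i < m\<close> assms(2) row broadcast_row_odd[OF assms(2)]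
      by (intro witness[of "i - 1" ?r]) (auto simp: grid_V_def staggered_broadcast_def path_dist_def)
  next
    case 2
    then show ?thesis using assms(2) row broadcast_row_odd[OF assms(2)]
      by (intro witness[of "i + 1" "3 - ?r"]) (auto simp: grid_V_def staggered_broadcast_def path_dist_def)
  next
    case 3
    then show ?thesis using assms(2) row
      by (intro witness[of i "3 - ?r"]) (auto simp: grid_V_def staggered_broadcast_def path_dist_def)
  qed
qed

lemma staggered_broadcast_dominating:
  assumes "2 \<le> m"
  shows "dominating_broadcast (grid_V m) (grid_E m) (staggered_broadcast m)"
  unfolding dominating_broadcast_def
  using staggered_broadcast_covers_even_column[OF _ _ assms] staggered_broadcast_covers_odd_column
  by fast

lemma staggered_broadcast_limited: "limited_broadcast 2 (grid_V m) (staggered_broadcast m)"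
  unfolding limited_broadcast_def
proof safe
  fix c j
  show "staggered_broadcast m (c, j) \<le> 2" by (simp add: staggered_broadcast_def)
  assume "(c, j) \<notin> grid_V m"
  then show "staggered_broadcast m (c, j) = 0"
    using broadcast_row_cases[of c] by (auto simp: staggered_broadcast_def grid_V_def)
qed

lemma sum_even_indicator: "(\<Sum>c<n. if even c then 2 else 0) = 2 * ((n + 1) div (2::nat))"
  by (induction n) auto

lemma staggered_broadcast_cost:
  assumes "1 \<le> m"
  shows "broadcast_cost (grid_V m) (staggered_broadcast m) = m + 1"
proof -
  have column: "(\<Sum>j<6. staggered_broadcast m (c, j)) = (if even c then 2 else if c + 1 = m then 1 else 0)"
    if "c < m" for c
  proof -
    have "(\<Sum>j<6. staggered_broadcast m (c, j))
        = (\<Sum>j<6. if j = broadcast_row c then (if even c then 2 else 0) else 0)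
        + (\<Sum>j<6. if j = 3 - broadcast_row c then (if odd c \<and> c + 1 = m then 1 else 0) else 0)"
      unfolding sum.distrib[symmetric]
      by (rule sum.cong) (use that broadcast_row_cases[of c] in \<open>auto simp: staggered_broadcast_def\<close>)
    also have "\<dots> = (if even c then 2 else if c + 1 = m then 1 else 0)"
      using broadcast_row_cases[of c] by (auto simp: sum.delta)
    finally show ?thesis .
  qed
  obtain n where n: "m = Suc n" using assms by (cases m) auto
  have "broadcast_cost (grid_V m) (staggered_broadcast m) = (\<Sum>c<m. \<Sum>j<6. staggered_broadcast m (c, j))"
    by (simp add: broadcast_cost_def grid_V_def sum.cartesian_product case_prod_beta')
  also have "\<dots> = (\<Sum>c<m. if even c then 2 else if c + 1 = m then 1 else 0)"
    by (rule sum.cong) (simp_all add: column)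
  also have "\<dots> = (\<Sum>c<n. if even c then 2 else 0) + (if even n then 2 else 1)"
    using n by (simp add: sum.lessThan_Suc cong: if_cong)
  also have "\<dots> = m + 1" unfolding sum_even_indicator using n by presburger
  finally show ?thesis .
qed

theorem corollary4p8:
  fixes m :: nat
  assumes "m \<ge> 3"
  shows "(m mod 4 = 0 \<longrightarrow> gamma_b 2 (grid_V m) (grid_E m) \<in> {m, m + 1})
       \<and> (m mod 4 \<noteq> 0 \<longrightarrow> gamma_b 2 (grid_V m) (grid_E m) = m + 1)"
proof -
  have "gamma_b 2 (grid_V m) (grid_E m) = m + 1"
  proof (rule gamma_b_eqI)
    show "limited_broadcast 2 (grid_V m) (staggered_broadcast m)"
      by (rule staggered_broadcast_limited)
    show "dominating_broadcast (grid_V m) (grid_E m) (staggered_broadcast m)"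
      using assms by (intro staggered_broadcast_dominating) simp
    show "broadcast_cost (grid_V m) (staggered_broadcast m) = m + 1"
      using assms by (intro staggered_broadcast_cost) simp
    show "m + 1 \<le> broadcast_cost (grid_V m) f"
      if "limited_broadcast 2 (grid_V m) f" "dominating_broadcast (grid_V m) (grid_E m) f" for f
      using assms that by (intro broadcast_cost_lower_bound) simp_all
  qed
  then show ?thesis by simp
qed

end
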